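(* Let $n\ge 2$, $n\ge d\ge 1$, let $\{\tilde V(\theta):\theta\in\Theta\}$ be an ORP of $O(d+1)$ to $e_{d+1}$ and $\{\tilde V_d(\phi):\phi\in\Phi\}$ an ORP of $O(d)$ to $e_d$, with $V^{(k)}$ defined below. Let $\gamma\in\mathbb{R}$ with $|\gamma|\le 1$, $\theta_1,\dots,\theta_{n-1}\in\Theta$, $\theta_n\in\Phi$. Define the $(d-1)\times n$ matrix $\hat C$ and the $n\times n$ matrix $A$ by $$\begin{pmatrix}\hat C\\ A\end{pmatrix}=V^{(1)}(\theta_1)\cdots V^{(n-1)}(\theta_{n-1})V^{(n)}(\theta_n)\begin{pmatrix}0_{d-1,n}\\ P(\gamma)\end{pmatrix},$$ where $P(\gamma)$ is the $n\times n$ matrix with $P_{2,1}=\gamma$, $P_{k+1,k}=1$ for $2\le k<n$, $P_{1,n}=1$ and all other entries $0$, and let $C$ be the $d\times n$ matrix with first row $C_{1,j}=\sqrt{1-\gamma^2}\,\delta_{1,j}$ and rows $2,\dots,d$ equal to $\hat C$. Then $(A,C)$ is a HOON pair.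
   Context: ${}^*$ denotes transpose. $(A,C)$ is HOON if $A$ is upper Hessenberg ($A_{i,j}=0$ for $i>j+1$), $C_{1,j}=0$ for $j>1$, and $A^*A=\mathbb{I}_n-C^*C$. An orthogonal reduction parameterization (ORP) of $O(m)$ to $e_k$ is a family $\{\tilde Q(\theta):\theta\in\Theta\}$, $\Theta\subset\mathbb{R}^{m-1}$, of real orthogonal $m\times m$ matrices such that for every nonzero $h\in\mathbb{R}^m$ there is a unique $\theta(h)$ with $\tilde Q(\theta)^*h=\|h\|e_k$. For $\theta\in\Theta$ write $\tilde V(\theta)=\begin{pmatrix}\tilde O&x\\ y^*&\mu\end{pmatrix}$ ($\tilde O\in\mathbb{R}^{d\times d}$, $x,y\in\mathbb{R}^d$, $\mu\in\mathbb{R}$) and for $1\le k<n$ set $V^{(k)}(\theta)=\begin{pmatrix}\tilde O&0_{d,k-1}&x\\ 0_{k-1,d}&\mathbb{I}_{k-1}&0_{k-1,1}\\ y^*&0_{1,k-1}&\mu\end{pmatrix}\oplus\mathbb{I}_{n-k-1}$, an $(n+d-1)\times(n+d-1)$ matrix; set $V^{(n)}(\phi)=\tilde V_d(\phi)\oplus\mathbb{I}_{n-1}$. *)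

theory Defs
  imports "Jordan_Normal_Form.Matrix"
begin

(* All matrix/vector indices in JNF are 0-based; paper indices are 1-based. *)

definition real_orthogonal :: "nat \<Rightarrow> real mat \<Rightarrow> bool" where
  "real_orthogonal m Q \<longleftrightarrow> Q \<in> carrier_mat m m \<and> transpose_mat Q * Q = 1\<^sub>m m"

definition vnorm :: "real vec \<Rightarrow> real" where
  "vnorm h = sqrt (h \<bullet> h)"

(* Orthogonal reduction parameterization of O(m) to e_k (k is 1-based),
   parameter set Theta \<subseteq> R^(m-1), family Q. *)
definition ORP :: "nat \<Rightarrow> nat \<Rightarrow> real vec set \<Rightarrow> (real vec \<Rightarrow> real mat) \<Rightarrow> bool" where
  "ORP m k Theta Q \<longleftrightarrow>
     Theta \<subseteq> carrier_vec (m - 1) \<and>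
     (\<forall>\<theta>\<in>Theta. real_orthogonal m (Q \<theta>)) \<and>
     (\<forall>h\<in>carrier_vec m. h \<noteq> 0\<^sub>v m \<longrightarrow>
        (\<exists>!\<theta>. \<theta> \<in> Theta \<and> transpose_mat (Q \<theta>) *\<^sub>v h = vnorm h \<cdot>\<^sub>v unit_vec m (k - 1)))"

definition HOON :: "real mat \<Rightarrow> real mat \<Rightarrow> bool" where
  "HOON A C \<longleftrightarrow>
     (let n = dim_col A in
       A \<in> carrier_mat n n \<and> dim_col C = n \<and>
       (\<forall>i<n. \<forall>j<n. i > j + 1 \<longrightarrow> A $$ (i, j) = 0) \<and>
       (\<forall>j<n. j > 0 \<longrightarrow> C $$ (0, j) = 0) \<and>
       transpose_mat A * A = 1\<^sub>m n - transpose_mat C * C)"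

(* V^(k)(theta) for 1 \<le> k < n, built from Vt = [[O, x],[y^*, mu]] of size (d+1)x(d+1):
   [[O, 0, x],[0, I_{k-1}, 0],[y^*, 0, mu]] \<oplus> I_{n-k-1}, of size (n+d-1)x(n+d-1).
   0-based: block rows/cols 0..d-1 carry O, row/col d+k-1 carries y^*, x, mu. *)
definition Vk :: "nat \<Rightarrow> nat \<Rightarrow> nat \<Rightarrow> real mat \<Rightarrow> real mat" where
  "Vk n d k M = mat (n + d - 1) (n + d - 1) (\<lambda>(i, j).
     if i < d \<and> j < d then M $$ (i, j)
     else if i < d \<and> j = d + k - 1 then M $$ (i, d)
     else if i = d + k - 1 \<and> j < d then M $$ (d, j)
     else if i = d + k - 1 \<and> j = d + k - 1 then M $$ (d, d)
     else if i = j then 1 else 0)"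

definition Vn :: "nat \<Rightarrow> nat \<Rightarrow> real mat \<Rightarrow> real mat" where
  "Vn n d M = mat (n + d - 1) (n + d - 1) (\<lambda>(i, j).
     if i < d \<and> j < d then M $$ (i, j) else if i = j then 1 else 0)"

definition Pmat :: "nat \<Rightarrow> real \<Rightarrow> real mat" where
  "Pmat n \<gamma> = mat n n (\<lambda>(i, j).
     if i = 1 \<and> j = 0 then \<gamma>
     else if 2 \<le> i \<and> i < n \<and> j = i - 1 then 1
     else if i = 0 \<and> j = n - 1 then 1
     else 0)"

definition Vprod :: "nat \<Rightarrow> nat \<Rightarrow> (real vec \<Rightarrow> real mat) \<Rightarrow> (real vec \<Rightarrow> real mat)
                      \<Rightarrow> (nat \<Rightarrow> real vec) \<Rightarrow> real mat" where
  "Vprod n d Vt Vd \<theta> = foldr (\<lambda>k M. Vk n d k (Vt (\<theta> k)) * M) [1..<n] (Vn n d (Vd (\<theta> n)))"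

end

theory Submission
  imports Defs
begin

text \<open>Every factor \<open>V^(k)\<close> is an orthogonal matrix embedded on a set of coordinates, so the
  product \<open>W\<close> is orthogonal and \<open>R = W S\<close> has the Gram matrix of \<open>S = (0; P(\<gamma>))\<close>, namely
  \<open>diag(\<gamma>\<^sup>2, 1, \<dots>, 1)\<close>; adjoining the row \<open>\<surd>(1 - \<gamma>\<^sup>2) e\<^sub>1\<close> completes it to the identity, which is
  \<open>A\<^sup>T A = I - C\<^sup>T C\<close>. Since \<open>V^(k)\<close> only mixes the first \<open>d\<close> coordinates with coordinate \<open>d + k - 1\<close>,
  the columns of \<open>W\<close> of index \<open>\<ge> d\<close> are upper triangular, and for \<open>j < n - 1\<close> column \<open>j\<close> of \<open>S\<close> is a multiple
  of the unit vector \<open>e\<^sub>d\<^sub>+\<^sub>j\<close>; this makes \<open>A\<close> upper Hessenberg.\<close>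

lemma gram_orthogonal_mult:
  assumes W: "real_orthogonal N W" and S: "S \<in> carrier_mat N m"
  shows "transpose_mat (W * S) * (W * S) = transpose_mat S * S"
proof -
  have Wc: "W \<in> carrier_mat N N" and WW: "transpose_mat W * W = 1\<^sub>m N"
    using W unfolding real_orthogonal_def by auto
  have "transpose_mat (W * S) * (W * S) = transpose_mat S * (transpose_mat W * (W * S))"
    using Wc S by (simp add: transpose_mult) (rule assoc_mult_mat[of _ m N _ N _ m], auto)
  also have "\<dots> = transpose_mat S * S"
    using Wc S WW by (simp add: assoc_mult_mat[symmetric, of _ N N _ N])
  finally show ?thesis .
qed

lemma real_orthogonal_mult:
  assumes "real_orthogonal N A" and "real_orthogonal N B"
  shows "real_orthogonal N (A * B)"
  using assms gram_orthogonal_mult[OF assms(1)] unfolding real_orthogonal_def by auto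

definition embed_mat :: "nat \<Rightarrow> nat set \<Rightarrow> (nat \<Rightarrow> nat) \<Rightarrow> 'a :: {zero, one} mat \<Rightarrow> 'a mat" where
  "embed_mat N I \<tau> M = mat N N (\<lambda>(i, j).
     if i \<in> I \<and> j \<in> I then M $$ (\<tau> i, \<tau> j) else if i = j then 1 else 0)"

lemma real_orthogonal_embed_mat:
  assumes M: "real_orthogonal m M" and I: "I \<subseteq> {..<N}" and \<tau>: "bij_betw \<tau> I {..<m}"
  shows "real_orthogonal N (embed_mat N I \<tau> M)"
proof -
  define E where "E = embed_mat N I \<tau> M"
  have Mc: "M \<in> carrier_mat m m" and MM: "transpose_mat M * M = 1\<^sub>m m"
    using M unfolding real_orthogonal_def by auto
  have "(transpose_mat E * E) $$ (i, j) = 1\<^sub>m N $$ (i, j)" if ij: "i < N" "j < N" for i j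
  proof -
    have outside: "(\<Sum>l\<in>{..<N} - I. E $$ (l, i) * E $$ (l, j)) = (if i = j \<and> i \<notin> I then 1 else 0)"
    proof -
      have "(\<Sum>l\<in>{..<N} - I. E $$ (l, i) * E $$ (l, j))
          = (\<Sum>l\<in>{..<N} - I. if l = i then (if i = j then 1 else 0) else 0)"
        using ij by (intro sum.cong) (auto simp: E_def embed_mat_def)
      then show ?thesis using ij by (simp add: sum.delta)
    qed
    have inside: "(\<Sum>l\<in>I. E $$ (l, i) * E $$ (l, j)) = (if i = j \<and> i \<in> I then 1 else 0)"
    proof (cases "i \<in> I \<and> j \<in> I")
      case True
      then have "\<tau> i < m" "\<tau> j < m" using \<tau> bij_betwE by blast+
      have "(\<Sum>l\<in>I. E $$ (l, i) * E $$ (l, j)) = (\<Sum>l\<in>I. M $$ (\<tau> l, \<tau> i) * M $$ (\<tau> l, \<tau> j))"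
        using I True ij by (intro sum.cong) (auto simp: E_def embed_mat_def)
      also have "\<dots> = (\<Sum>k<m. M $$ (k, \<tau> i) * M $$ (k, \<tau> j))"
        by (rule sum.reindex_bij_betw[OF \<tau>])
      also have "\<dots> = (transpose_mat M * M) $$ (\<tau> i, \<tau> j)"
        using Mc \<open>\<tau> i < m\<close> \<open>\<tau> j < m\<close> by (simp add: scalar_prod_def lessThan_atLeast0)
      also have "\<dots> = (if i = j then 1 else 0)"
        using MM \<open>\<tau> i < m\<close> \<open>\<tau> j < m\<close> True bij_betw_imp_inj_on[OF \<tau>] by (auto dest: inj_onD)
      finally show ?thesis using True by simp
    next
      case False
      then show ?thesis
        using I ij by (auto intro!: sum.neutral simp: E_def embed_mat_def)
    qed
    have "(transpose_mat E * E) $$ (i, j) = (\<Sum>l<N. E $$ (l, i) * E $$ (l, j))"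
      using ij by (simp add: E_def embed_mat_def scalar_prod_def lessThan_atLeast0)
    also have "\<dots> = (\<Sum>l\<in>{..<N} - I. E $$ (l, i) * E $$ (l, j)) + (\<Sum>l\<in>I. E $$ (l, i) * E $$ (l, j))"
      using I by (simp add: sum.subset_diff)
    finally show ?thesis using ij outside inside by auto
  qed
  then show ?thesis
    unfolding real_orthogonal_def E_def[symmetric] by (auto intro!: eq_matI simp: E_def embed_mat_def)
qed

lemma gram_append_rows:
  fixes X Y :: "'a :: comm_ring_1 mat"
  assumes X: "X \<in> carrier_mat a n" and Y: "Y \<in> carrier_mat b n"
  shows "transpose_mat (X @\<^sub>r Y) * (X @\<^sub>r Y) = transpose_mat X * X + transpose_mat Y * Y"
proof -
  have XY: "X @\<^sub>r Y = four_block_mat X (0\<^sub>m a 0) Y (0\<^sub>m b 0)"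
    using X Y unfolding append_rows_def by auto
  have "transpose_mat (X @\<^sub>r Y) * (X @\<^sub>r Y)
      = four_block_mat (transpose_mat X) (transpose_mat Y) (0\<^sub>m 0 a) (0\<^sub>m 0 b) * (X @\<^sub>r Y)"
    unfolding XY transpose_four_block_mat[OF X zero_carrier_mat Y zero_carrier_mat] by simp
  also have "\<dots> = four_block_mat (transpose_mat X * X + transpose_mat Y * Y) (0\<^sub>m n 0) (0\<^sub>m 0 n) (0\<^sub>m 0 0)"
    unfolding XY using X Y
    by (subst mult_four_block_mat[OF _ _ zero_carrier_mat zero_carrier_mat X zero_carrier_mat Y zero_carrier_mat])
      auto
  also have "\<dots> = transpose_mat X * X + transpose_mat Y * Y"
    using X Y by (intro eq_matI) auto
  finally show ?thesis .
qed

lemma gram_complement_append_rows: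
  fixes c X A P :: "'a :: comm_ring_1 mat"
  assumes c: "c \<in> carrier_mat k n" and X: "X \<in> carrier_mat m n" and A: "A \<in> carrier_mat l n"
    and P: "P \<in> carrier_mat p n"
    and XA: "transpose_mat X * X + transpose_mat A * A = transpose_mat P * P"
    and cP: "transpose_mat c * c + transpose_mat P * P = 1\<^sub>m n"
  shows "transpose_mat A * A = 1\<^sub>m n - transpose_mat (c @\<^sub>r X) * (c @\<^sub>r X)"
proof (rule eq_matI)
  fix i j assume "i < dim_row (1\<^sub>m n - transpose_mat (c @\<^sub>r X) * (c @\<^sub>r X))"
    and "j < dim_col (1\<^sub>m n - transpose_mat (c @\<^sub>r X) * (c @\<^sub>r X))"
  then have ij: "i < n" "j < n" using carrier_append_rows[OF c X] by auto
  have "(transpose_mat A * A) $$ (i, j) = (transpose_mat P * P) $$ (i, j) - (transpose_mat X * X) $$ (i, j)"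
    using arg_cong[OF XA, of "\<lambda>M. M $$ (i, j)"] ij X A by (simp add: eq_diff_eq add.commute)
  moreover have "(transpose_mat P * P) $$ (i, j) = 1\<^sub>m n $$ (i, j) - (transpose_mat c * c) $$ (i, j)"
    using arg_cong[OF cP, of "\<lambda>M. M $$ (i, j)"] ij c P by (simp add: eq_diff_eq add.commute)
  ultimately show "(transpose_mat A * A) $$ (i, j) = (1\<^sub>m n - transpose_mat (c @\<^sub>r X) * (c @\<^sub>r X)) $$ (i, j)"
    using ij c X by (simp add: gram_append_rows[OF c X])
qed (use A carrier_append_rows[OF c X] in auto)

lemma Vk_eq_embed_mat:
  assumes "1 \<le> k"
  shows "Vk n d k M = embed_mat (n + d - 1) ({..<d} \<union> {d + k - 1}) (\<lambda>i. if i < d then i else d) M"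
  using assms unfolding Vk_def embed_mat_def by (intro eq_matI) auto

lemma Vn_eq_embed_mat: "Vn n d M = embed_mat (n + d - 1) {..<d} id M"
  unfolding Vn_def embed_mat_def by (intro eq_matI) auto

lemma real_orthogonal_Vk:
  assumes "real_orthogonal (d + 1) M" and "1 \<le> k" and "k < n"
  shows "real_orthogonal (n + d - 1) (Vk n d k M)"
proof -
  have "bij_betw (\<lambda>i. if i < d then i else d) ({..<d} \<union> {d + k - 1}) {..<d + 1}"
    using assms(2) by (auto simp: bij_betw_def inj_on_def image_def)
  then show ?thesis
    unfolding Vk_eq_embed_mat[OF assms(2)] using assms by (intro real_orthogonal_embed_mat) auto
qed

lemma real_orthogonal_Vn:
  assumes "real_orthogonal d M" and "1 \<le> n"
  shows "real_orthogonal (n + d - 1) (Vn n d M)"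
  unfolding Vn_eq_embed_mat using assms by (intro real_orthogonal_embed_mat) auto

lemma real_orthogonal_Vprod:
  assumes "\<forall>k\<in>{1..<n}. real_orthogonal (d + 1) (Vt (\<theta> k))"
    and "real_orthogonal d (Vd (\<theta> n))" and "1 \<le> n"
  shows "real_orthogonal (n + d - 1) (Vprod n d Vt Vd \<theta>)"
proof -
  have "real_orthogonal (n + d - 1) (foldr (\<lambda>k M. Vk n d k (Vt (\<theta> k)) * M) ks (Vn n d (Vd (\<theta> n))))"
    if "set ks \<subseteq> {1..<n}" for ks
    using that
  proof (induction ks)
    case Nil
    then show ?case using real_orthogonal_Vn assms(2,3) by simp
  next
    case (Cons k ks)
    then have "real_orthogonal (n + d - 1) (Vk n d k (Vt (\<theta> k)))"
      using assms(1) by (intro real_orthogonal_Vk) auto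
    then show ?case using Cons by (simp add: real_orthogonal_mult)
  qed
  then show ?thesis unfolding Vprod_def by simp
qed

text \<open>In a product \<open>V^(k) \<cdots> V^(n)\<close> the columns \<open>d, \<dots>, d + k - 2\<close> are still unit
  vectors, and this is what keeps the columns of index \<open>\<ge> d\<close> upper triangular when the next
  factor mixes row \<open>d + k - 2\<close> with the first \<open>d\<close> rows.\<close>

definition tail_triangular :: "nat \<Rightarrow> nat \<Rightarrow> 'a :: {zero, one} mat \<Rightarrow> bool" where
  "tail_triangular d p W \<longleftrightarrow> (\<forall>r<dim_row W. \<forall>c<dim_col W. d \<le> c \<longrightarrow>
     (c < p \<longrightarrow> W $$ (r, c) = (if r = c then 1 else 0)) \<and> (c < r \<longrightarrow> W $$ (r, c) = 0))"

lemma tail_triangular_Vn: "tail_triangular d (d + n - 1) (Vn n d M)"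
  unfolding tail_triangular_def Vn_def by auto

lemma tail_triangular_Vk_mult:
  fixes W M :: "real mat"
  assumes W: "tail_triangular d (d + k) W" "W \<in> carrier_mat (n + d - 1) (n + d - 1)"
    and k: "1 \<le> k" "k < n"
  shows "tail_triangular d (d + k - 1) (Vk n d k M * W)"
  unfolding tail_triangular_def
proof (intro allI impI conjI)
  let ?N = "n + d - 1" and ?V = "Vk n d k M"
  fix r c assume "r < dim_row (?V * W)" "c < dim_col (?V * W)" and dc: "d \<le> c"
  then have r: "r < ?N" and c: "c < ?N" using W by (auto simp: Vk_def)
  have W_rc: "W $$ (l, c) = (if l = c then 1 else 0)" if "l < ?N" "c < d + k" for l
    using W that c dc unfolding tail_triangular_def by auto
  have VW: "(?V * W) $$ (r, c) = (\<Sum>l<?N. ?V $$ (r, l) * W $$ (l, c))"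
    using r c W by (simp add: Vk_def scalar_prod_def lessThan_atLeast0)
  show "(?V * W) $$ (r, c) = (if r = c then 1 else 0)" if "c < d + k - 1"
  proof -
    have "(?V * W) $$ (r, c) = ?V $$ (r, c)"
      unfolding VW using W_rc that c by (simp add: if_distrib[of "\<lambda>x. _ * x"] sum.delta cong: if_cong)
    then show ?thesis using r c dc that k by (simp add: Vk_def)
  qed
  show "(?V * W) $$ (r, c) = 0" if "c < r"
  proof (cases "r = d + k - 1")
    case True
    then show ?thesis
      unfolding VW using that W_rc r c dc k
      by (intro sum.neutral) (auto simp: Vk_def)
  next
    case False
    have "(?V * W) $$ (r, c) = W $$ (r, c)"
      unfolding VW using r dc that False by (auto simp: Vk_def if_distrib[of "\<lambda>x. x * _"] sum.delta cong: if_cong)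
    then show ?thesis using W r c dc that unfolding tail_triangular_def by auto
  qed
qed

lemma tail_triangular_foldr_Vk:
  fixes G :: "nat \<Rightarrow> real mat" and X :: "real mat" and d :: nat
  assumes "1 \<le> m" and "m \<le> n"
  defines "W \<equiv> foldr (\<lambda>k M. Vk n d k (G k) * M) [m..<n] (Vn n d X)"
  shows "W \<in> carrier_mat (n + d - 1) (n + d - 1) \<and> tail_triangular d (d + m - 1) W"
  unfolding W_def using assms(2,1)
proof (induction m rule: inc_induct)
  case base
  then show ?case using tail_triangular_Vn by (simp add: Vn_def)
next
  case (step m)
  have "Vk n d m (G m) \<in> carrier_mat (n + d - 1) (n + d - 1)"
    by (simp add: Vk_def)
  then show ?case
    using step tail_triangular_Vk_mult[of d m _ n] by (simp add: upt_conv_Cons)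
qed

lemma tail_triangular_Vprod:
  assumes "1 \<le> n"
  shows "tail_triangular d d (Vprod n d Vt Vd \<theta>)"
  using tail_triangular_foldr_Vk[of 1 n] assms unfolding Vprod_def by auto

lemma index_Pmat:
  assumes "2 \<le> n" and "r < n" and "j < n"
  shows "Pmat n \<gamma> $$ (r, j) = (if r = (if j = n - 1 then 0 else j + 1) then (if j = 0 then \<gamma> else 1) else 0)"
  using assms unfolding Pmat_def by auto

lemma Pmat_gram:
  assumes "2 \<le> n" and "\<bar>\<gamma>\<bar> \<le> 1"
  defines "c \<equiv> mat 1 n (\<lambda>(_, j). if j = 0 then sqrt (1 - \<gamma>\<^sup>2) else 0)"
  shows "transpose_mat c * c + transpose_mat (Pmat n \<gamma>) * Pmat n \<gamma> = 1\<^sub>m n"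
proof (rule eq_matI)
  fix i j assume "i < dim_row (1\<^sub>m n :: real mat)" and "j < dim_col (1\<^sub>m n :: real mat)"
  then have ij: "i < n" "j < n" by auto
  have "1 - \<gamma>\<^sup>2 \<ge> 0"
    using assms(2) by (simp add: abs_square_le_1)
  then have cc: "(transpose_mat c * c) $$ (i, j) = (if i = 0 \<and> j = 0 then 1 - \<gamma>\<^sup>2 else 0)"
    using ij by (simp add: c_def scalar_prod_def)
  have "(transpose_mat (Pmat n \<gamma>) * Pmat n \<gamma>) $$ (i, j) = (\<Sum>r<n. Pmat n \<gamma> $$ (r, i) * Pmat n \<gamma> $$ (r, j))"
    using ij by (simp add: Pmat_def scalar_prod_def lessThan_atLeast0)
  also have "\<dots> = (if i = j then (if i = 0 then \<gamma>\<^sup>2 else 1) else 0)"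
    using ij assms by (auto simp: index_Pmat power2_eq_square if_distrib[of "\<lambda>x. x * _"] sum.delta
        cong: if_cong split: if_splits)
  finally show "(transpose_mat c * c + transpose_mat (Pmat n \<gamma>) * Pmat n \<gamma>) $$ (i, j) = 1\<^sub>m n $$ (i, j)"
    using ij cc by (simp add: c_def Pmat_def)
qed (auto simp: c_def Pmat_def)

lemma tail_triangular_mult_Pmat_hessenberg:
  fixes W :: "real mat"
  assumes W: "tail_triangular d d W" "W \<in> carrier_mat (d - 1 + n) (d - 1 + n)"
    and "1 \<le> d" and "2 \<le> n" and "i < n" and "j + 1 < i"
  shows "(W * (0\<^sub>m (d - 1) n @\<^sub>r Pmat n \<gamma>)) $$ (d - 1 + i, j) = 0"
proof -
  let ?S = "0\<^sub>m (d - 1) n @\<^sub>r Pmat n \<gamma>"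
  have S: "?S $$ (l, j) = (if l = d + j then (if j = 0 then \<gamma> else 1) else 0)" if "l < d - 1 + n" for l
    using that assms by (auto simp: append_rows_def index_Pmat Pmat_def)
  have "(W * ?S) $$ (d - 1 + i, j) = (\<Sum>l<d - 1 + n. W $$ (d - 1 + i, l) * ?S $$ (l, j))"
    using W assms by (simp add: Pmat_def append_rows_def scalar_prod_def lessThan_atLeast0)
  also have "\<dots> = (\<Sum>l<d - 1 + n. if l = d + j then W $$ (d - 1 + i, d + j) * (if j = 0 then \<gamma> else 1) else 0)"
    by (rule sum.cong) (use S in fastforce)+
  also have "\<dots> = W $$ (d - 1 + i, d + j) * (if j = 0 then \<gamma> else 1)"
    using assms by simp
  also have "W $$ (d - 1 + i, d + j) = 0"
    using W assms unfolding tail_triangular_def by auto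
  finally show ?thesis by simp
qed

theorem corollary7p3:
  fixes n d :: nat and Theta Phi :: "real vec set" and Vt Vd :: "real vec \<Rightarrow> real mat"
    and \<gamma> :: real and \<theta> :: "nat \<Rightarrow> real vec"
  assumes "n \<ge> 2" and "1 \<le> d" and "d \<le> n"
    and "ORP (d + 1) (d + 1) Theta Vt"
    and "ORP d d Phi Vd"
    and "\<bar>\<gamma>\<bar> \<le> 1"
    and "\<forall>k\<in>{1..<n}. \<theta> k \<in> Theta"
    and "\<theta> n \<in> Phi"
  defines "R \<equiv> Vprod n d Vt Vd \<theta> * (0\<^sub>m (d - 1) n @\<^sub>r Pmat n \<gamma>)"
  defines "Chat \<equiv> mat (d - 1) n (\<lambda>(i, j). R $$ (i, j))"
  defines "A \<equiv> mat n n (\<lambda>(i, j). R $$ (d - 1 + i, j))"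
  defines "C \<equiv> mat d n (\<lambda>(i, j). if i = 0 then (if j = 0 then sqrt (1 - \<gamma>\<^sup>2) else 0)
                                  else Chat $$ (i - 1, j))"
  shows "HOON A C"
proof -
  define W where "W = Vprod n d Vt Vd \<theta>"
  define c where "c = mat 1 n (\<lambda>(_, j). if j = 0 then sqrt (1 - \<gamma>\<^sup>2) else 0)"
  have dim: "n + d - 1 = d - 1 + n" using assms(2) by simp
  have W: "real_orthogonal (d - 1 + n) W" "tail_triangular d d W"
    using assms(1,4,5,7,8) real_orthogonal_Vprod tail_triangular_Vprod
    unfolding W_def ORP_def dim[symmetric] by auto
  have P: "0\<^sub>m (d - 1) n @\<^sub>r Pmat n \<gamma> \<in> carrier_mat (d - 1 + n) n"
    by (auto simp: Pmat_def)
  have "R \<in> carrier_mat (d - 1 + n) n"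
    using W(1) P unfolding R_def W_def[symmetric] real_orthogonal_def by auto
  then have R: "R = Chat @\<^sub>r A"
    unfolding Chat_def A_def append_rows_def by (intro eq_matI) auto
  have C: "C = c @\<^sub>r Chat"
    using assms(2) unfolding C_def c_def append_rows_def by (intro eq_matI) (auto simp: Chat_def)
  have "transpose_mat Chat * Chat + transpose_mat A * A = transpose_mat (Pmat n \<gamma>) * Pmat n \<gamma>"
    using gram_append_rows[of Chat "d - 1" n A n] gram_orthogonal_mult[OF W(1) P]
      gram_append_rows[of "0\<^sub>m (d - 1) n" "d - 1" n "Pmat n \<gamma>" n]
    unfolding R_def W_def[symmetric] R[symmetric] by (auto simp: Chat_def A_def Pmat_def)
  then have "transpose_mat A * A = 1\<^sub>m n - transpose_mat C * C"
    unfolding C using Pmat_gram[OF assms(1,6)]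
    by (intro gram_complement_append_rows[of _ 1 n _ "d - 1" _ n _ n]) (auto simp: c_def Chat_def A_def Pmat_def)
  moreover have "A $$ (i, j) = 0" if "i < n" "j + 1 < i" for i j
    using tail_triangular_mult_Pmat_hessenberg[OF W(2) _ assms(2,1) that, of \<gamma>] W(1) that
    unfolding A_def R_def W_def[symmetric] real_orthogonal_def by auto
  ultimately show ?thesis
    unfolding HOON_def Let_def using assms(2) by (auto simp: A_def C_def)
qed

end
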